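(* Let $2\le d\leq 4$ and let $\rho$ be a diagonal symmetric (DS) state acting on $\mathbb{C}^d\otimes\mathbb{C}^d$. Then $\rho$ is separable if and only if $\rho$ is PPT (i.e. $\rho^{T_B}\succeq 0$).
   Context: Let $\{\ket{0},\dots,\ket{d-1}\}$ be the computational basis of $\mathbb{C}^d$. Define $\ket{D_{ii}}=\ket{ii}$ and, for $i<j$, $\ket{D_{ij}}=(\ket{ij}+\ket{ji})/\sqrt{2}$. A state $\rho$ on $\mathbb{C}^d\otimes\mathbb{C}^d$ is diagonal symmetric (DS) if $\rho=\sum_{0\le i\le j<d}p_{ij}\ket{D_{ij}}\bra{D_{ij}}$ with $p_{ij}\ge 0$ and $\sum_{i\le j}p_{ij}=1$. A state is separable if it is a convex combination of product states $\rho^A\otimes\rho^B$. The partial transpose $\rho^{T_B}$ is taken with respect to the computational basis of the second factor. *)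

theory Defs
  imports Complex_Main
begin

text \<open>Operators on a finite-dimensional Hilbert space with orthonormal basis indexed by a
finite set S are represented as functions M :: 'i => 'i => complex (matrix entries);
only the entries with both indices in S are meaningful.
For C^d (x) C^d the basis is indexed by pairs (i,j) with i,j < d, where (i,j) stands for |i>|j>.\<close>

definition psd_on :: "'i set \<Rightarrow> ('i \<Rightarrow> 'i \<Rightarrow> complex) \<Rightarrow> bool" where
  "psd_on S M \<longleftrightarrow> (\<forall>v :: 'i \<Rightarrow> complex.
     (\<Sum>a\<in>S. \<Sum>b\<in>S. cnj (v a) * M a b * v b) \<in> \<real> \<and>
     0 \<le> Re (\<Sum>a\<in>S. \<Sum>b\<in>S. cnj (v a) * M a b * v b))"

definition trace_on :: "'i set \<Rightarrow> ('i \<Rightarrow> 'i \<Rightarrow> complex) \<Rightarrow> complex" where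
  "trace_on S M = (\<Sum>a\<in>S. M a a)"

definition density_on :: "'i set \<Rightarrow> ('i \<Rightarrow> 'i \<Rightarrow> complex) \<Rightarrow> bool" where
  "density_on S M \<longleftrightarrow> psd_on S M \<and> trace_on S M = 1"

definition bidx :: "nat \<Rightarrow> (nat \<times> nat) set" where
  "bidx d = {..<d} \<times> {..<d}"

text \<open>Separable: a finite convex combination of product states rho_A (x) rho_B,
  with (rho_A (x) rho_B)((i,j),(k,l)) = rho_A(i,k) * rho_B(j,l).\<close>
definition separable :: "nat \<Rightarrow> (nat \<times> nat \<Rightarrow> nat \<times> nat \<Rightarrow> complex) \<Rightarrow> bool" where
  "separable d \<rho> \<longleftrightarrow> (\<exists>(n::nat) (p :: nat \<Rightarrow> real) A B.
      (\<forall>m<n. 0 \<le> p m) \<and> (\<Sum>m<n. p m) = 1 \<and>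
      (\<forall>m<n. density_on {..<d} (A m) \<and> density_on {..<d} (B m)) \<and>
      (\<forall>i<d. \<forall>j<d. \<forall>k<d. \<forall>l<d.
          \<rho> (i, j) (k, l) = (\<Sum>m<n. complex_of_real (p m) * A m i k * B m j l)))"

definition partial_transpose_B :: "(nat \<times> nat \<Rightarrow> nat \<times> nat \<Rightarrow> complex) \<Rightarrow> (nat \<times> nat \<Rightarrow> nat \<times> nat \<Rightarrow> complex)" where
  "partial_transpose_B \<rho> = (\<lambda>(i, j) (k, l). \<rho> (i, l) (k, j))"

definition PPT :: "nat \<Rightarrow> (nat \<times> nat \<Rightarrow> nat \<times> nat \<Rightarrow> complex) \<Rightarrow> bool" where
  "PPT d \<rho> \<longleftrightarrow> psd_on (bidx d) (partial_transpose_B \<rho>)"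

definition Dvec :: "nat \<Rightarrow> nat \<Rightarrow> nat \<times> nat \<Rightarrow> complex" where
  "Dvec i j = (\<lambda>a. if i = j then (if a = (i, i) then 1 else 0)
                   else ((if a = (i, j) then 1 else 0) + (if a = (j, i) then 1 else 0))
                        / complex_of_real (sqrt 2))"

definition DS_state :: "nat \<Rightarrow> (nat \<times> nat \<Rightarrow> nat \<times> nat \<Rightarrow> complex) \<Rightarrow> bool" where
  "DS_state d \<rho> \<longleftrightarrow> (\<exists>p :: nat \<Rightarrow> nat \<Rightarrow> real.
      (\<forall>i j. i \<le> j \<and> j < d \<longrightarrow> 0 \<le> p i j) \<and>
      (\<Sum>(i, j)\<in>{(i, j). i \<le> j \<and> j < d}. p i j) = 1 \<and>
      (\<forall>a\<in>bidx d. \<forall>b\<in>bidx d.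
          \<rho> a b = (\<Sum>(i, j)\<in>{(i, j). i \<le> j \<and> j < d}.
                      complex_of_real (p i j) * Dvec i j a * cnj (Dvec i j b))))"

end

theory Submission
  imports Defs
begin

text \<open>
  Separable states are PPT since the partial transpose of a product state \<open>A \<otimes> B\<close> is
  \<open>A \<otimes> B\<^sup>T\<close>, whose quadratic form at v is \<open>tr (C B)\<close> for the positive matrix \<open>C = V\<^sup>* A V\<close>
  (V the \<open>d \<times> d\<close> matrix of the coordinates of v), and the trace of a product of positive matrices
  is nonnegative.

  Conversely, a DS state satisfies \<open>\<rho>\<^sub>i\<^sub>j\<^sub>,\<^sub>k\<^sub>l = M\<^sub>i\<^sub>j\<close> if \<open>{i, j} = {k, l}\<close> and 0 otherwise, for a
  symmetric nonnegative \<open>d \<times> d\<close> matrix M, which is the block of \<open>\<rho>\<^sup>T\<^sup>B\<close> on the vectors \<open>|i i\<rangle>\<close>.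
  So if \<rho> is PPT then M is doubly nonnegative, and for \<open>d \<le> 4\<close> this makes M completely positive,
  \<open>M = \<Sum> u u\<^sup>T\<close> with entrywise nonnegative u: rank-one terms are peeled off at vertices of the
  support graph whose neighbourhood is a clique, and a matrix without such vertices is supported on
  a chordless 4-cycle, which is decomposed explicitly after a diagonal scaling. Finally each term
  \<open>u\<^sub>i u\<^sub>j [{i, j} = {k, l}]\<close> is a phase average of product states \<open>|\<phi>\<rangle>\<langle>\<phi>| \<otimes> |\<phi>\<rangle>\<langle>\<phi>|\<close>;
  the phases \<open>2\<^sup>i\<close> modulo 17 separate the pairs \<open>{i, j}\<close> only because \<open>d \<le> 4\<close>.
\<close>

section \<open>Positive semidefinite matrices\<close>

definition quad_form :: "'i set \<Rightarrow> ('i \<Rightarrow> 'i \<Rightarrow> complex) \<Rightarrow> ('i \<Rightarrow> complex) \<Rightarrow> complex" where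
  "quad_form S M v = (\<Sum>a\<in>S. \<Sum>b\<in>S. cnj (v a) * M a b * v b)"

definition unit_vec :: "'i \<Rightarrow> 'i \<Rightarrow> complex" where
  "unit_vec k a = (if a = k then 1 else 0)"

lemma psd_on_iff_quad_form:
  "psd_on S M \<longleftrightarrow> (\<forall>v. quad_form S M v \<in> \<real> \<and> 0 \<le> Re (quad_form S M v))"
  unfolding psd_on_def quad_form_def by simp

lemma psd_on_quad_form:
  "psd_on S M \<Longrightarrow> quad_form S M v \<in> \<real>" "psd_on S M \<Longrightarrow> 0 \<le> Re (quad_form S M v)"
  by (simp_all add: psd_on_iff_quad_form)

lemma cnj_unit_vec [simp]: "cnj (unit_vec k a) = unit_vec k a"
  by (simp add: unit_vec_def)

lemma sum_unit_vec_left: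
  assumes "finite S" "k \<in> S"
  shows "(\<Sum>b\<in>S. unit_vec k b * f b) = f k"
proof -
  have "(\<Sum>b\<in>S. unit_vec k b * f b) = (\<Sum>b\<in>S. if b = k then f b else 0)"
    by (rule sum.cong) (auto simp: unit_vec_def)
  then show ?thesis using assms by (simp add: sum.delta')
qed

lemma sum_unit_vec_right: "finite S \<Longrightarrow> k \<in> S \<Longrightarrow> (\<Sum>b\<in>S. f b * unit_vec k b) = f k"
  using sum_unit_vec_left[of S k f] by (simp add: mult.commute)

lemma quad_form_add_unit_vec:
  assumes "finite S" "k \<in> S"
  shows "quad_form S M (\<lambda>a. v a + c * unit_vec k a) = quad_form S M v
     + cnj c * (\<Sum>b\<in>S. M k b * v b) + c * (\<Sum>a\<in>S. cnj (v a) * M a k) + cnj c * c * M k k"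
proof -
  have expand: "cnj (v a + c * unit_vec k a) * M a b * (v b + c * unit_vec k b) =
     cnj (v a) * M a b * v b + unit_vec k b * (c * cnj (v a) * M a k)
     + unit_vec k a * (cnj c * M k b * v b) + unit_vec k a * (unit_vec k b * (cnj c * c * M k k))"
    for a b by (simp add: unit_vec_def algebra_simps)
  have "(\<Sum>a\<in>S. \<Sum>b\<in>S. unit_vec k b * (c * cnj (v a) * M a k)) = c * (\<Sum>a\<in>S. cnj (v a) * M a k)"
    using assms by (simp add: sum_unit_vec_left sum_distrib_left mult.assoc)
  moreover have "(\<Sum>a\<in>S. \<Sum>b\<in>S. unit_vec k a * (cnj c * M k b * v b)) = cnj c * (\<Sum>b\<in>S. M k b * v b)"
    using assms by (simp add: sum_unit_vec_left mult.assoc flip: sum_distrib_left)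
  moreover have "(\<Sum>a\<in>S. \<Sum>b\<in>S. unit_vec k a * (unit_vec k b * (cnj c * c * M k k))) = cnj c * c * M k k"
    using assms by (simp add: sum_unit_vec_left flip: sum_distrib_left)
  ultimately show ?thesis
    unfolding quad_form_def expand sum.distrib by simp
qed

lemma quad_form_two_units:
  assumes "finite S" "a \<in> S" "b \<in> S"
  shows "quad_form S M (\<lambda>x. c * unit_vec a x + e * unit_vec b x)
    = cnj c * c * M a a + cnj e * c * M b a + e * cnj c * M a b + cnj e * e * M b b"
proof -
  have "quad_form S M (\<lambda>x. 0 + c * unit_vec a x) = cnj c * c * M a a"
    using quad_form_add_unit_vec[OF assms(1,2), of M "\<lambda>_. 0" c] by (simp add: quad_form_def)
  then show ?thesis
    using quad_form_add_unit_vec[OF assms(1,3), of M "\<lambda>x. c * unit_vec a x" e]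
      sum_unit_vec_right[OF assms(1,2), of "\<lambda>y. c * M b y"]
      sum_unit_vec_left[OF assms(1,2), of "\<lambda>y. cnj c * M y b"]
    by (simp add: algebra_simps)
qed

lemma psd_on_hermitian:
  assumes "psd_on S M" "finite S" "a \<in> S" "b \<in> S"
  shows "M a b = cnj (M b a)"
proof -
  have "quad_form S M (\<lambda>x. c * unit_vec a x + e * unit_vec b x) \<in> \<real>" for c e
    using assms(1) by (rule psd_on_quad_form)
  from this[of 1 1] this[of 1 \<i>] this[of 1 0] this[of 0 1] show ?thesis
    unfolding quad_form_two_units[OF assms(2-4)] by (simp add: complex_is_Real_iff complex_eq_iff)
qed

lemma psd_on_diag:
  assumes "psd_on S M" "finite S" "a \<in> S"
  shows "M a a \<in> \<real>" "0 \<le> Re (M a a)"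
  using psd_on_quad_form[OF assms(1), of "\<lambda>x. 1 * unit_vec a x + 0 * unit_vec a x"]
  unfolding quad_form_two_units[OF assms(2,3,3)] by simp_all

lemma psd_on_zero_diag:
  assumes "psd_on S M" "finite S" "a \<in> S" "b \<in> S" "M a a = 0"
  shows "M b a = 0" "M a b = 0"
proof -
  let ?z = "M b a"
  have herm: "M a b = cnj ?z" using psd_on_hermitian[OF assms(1-4)] .
  \<comment> \<open>at \<open>-t cnj z e\<^sub>a + e\<^sub>b\<close> the form is \<open>M b b - 2 t \<bar>z\<bar>\<^sup>2\<close>, nonnegative for all t only if z = 0\<close>
  have bound: "2 * t * (cmod ?z)\<^sup>2 \<le> Re (M b b)" for t :: real
  proof -
    let ?c = "- of_real t * cnj ?z"
    have "0 \<le> Re (quad_form S M (\<lambda>x. ?c * unit_vec a x + 1 * unit_vec b x))"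
      using assms(1) by (rule psd_on_quad_form)
    also have "\<dots> = Re (M b b) - 2 * t * (cmod ?z)\<^sup>2"
      unfolding quad_form_two_units[OF assms(2-4)] assms(5) herm cmod_power2
      by (simp add: algebra_simps power2_eq_square)
    finally show ?thesis by simp
  qed
  show "M b a = 0"
  proof (rule ccontr)
    assume "M b a \<noteq> 0"
    then have pos: "0 < (cmod ?z)\<^sup>2" by simp
    have "2 * ((Re (M b b) + 1) / (2 * (cmod ?z)\<^sup>2)) * (cmod ?z)\<^sup>2 \<le> Re (M b b)" by (rule bound)
    with pos show False by (simp add: field_simps)
  qed
  then show "M a b = 0" using herm by simp
qed

lemma psd_on_add:
  assumes "psd_on S M" "psd_on S N"
  shows "psd_on S (\<lambda>a b. M a b + N a b)"
proof -
  have "quad_form S (\<lambda>a b. M a b + N a b) v = quad_form S M v + quad_form S N v" for v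
    unfolding quad_form_def by (simp add: distrib_left distrib_right sum.distrib)
  then show ?thesis
    using assms unfolding psd_on_iff_quad_form by (simp add: Reals_add)
qed

lemma psd_on_scale:
  assumes "psd_on S M" "0 \<le> c"
  shows "psd_on S (\<lambda>a b. complex_of_real c * M a b)"
proof -
  have "quad_form S (\<lambda>a b. complex_of_real c * M a b) v = of_real c * quad_form S M v" for v
    unfolding quad_form_def by (simp add: sum_distrib_left ac_simps)
  then show ?thesis
    using assms unfolding psd_on_iff_quad_form by (simp add: Reals_mult)
qed

lemma psd_on_rank1: "psd_on S (\<lambda>a b. x a * cnj (x b))"
  unfolding psd_on_iff_quad_form
proof
  fix v
  let ?z = "\<Sum>a\<in>S. cnj (v a) * x a"
  have "quad_form S (\<lambda>a b. x a * cnj (x b)) v = ?z * (\<Sum>b\<in>S. cnj (x b) * v b)"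
    unfolding quad_form_def sum_product by (simp add: mult.assoc)
  also have "\<dots> = ?z * cnj ?z" by (simp add: mult.commute)
  also have "\<dots> = complex_of_real ((Re ?z)\<^sup>2 + (Im ?z)\<^sup>2)" by (rule complex_mult_cnj)
  finally show "quad_form S (\<lambda>a b. x a * cnj (x b)) v \<in> \<real> \<and>
      0 \<le> Re (quad_form S (\<lambda>a b. x a * cnj (x b)) v)" by simp
qed

lemma psd_on_schur_complement:
  assumes psd: "psd_on S B" and fin: "finite S" and k: "k \<in> S" and nz: "B k k \<noteq> 0"
  shows "psd_on S (\<lambda>a b. B a b - B a k * B k b / B k k)"
  unfolding psd_on_iff_quad_form
proof
  fix v
  let ?y = "\<Sum>b\<in>S. B k b * v b"
  have real: "cnj (B k k) = B k k"
    using psd_on_diag(1)[OF psd fin k] by (simp add: Reals_cnj_iff)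
  have col: "(\<Sum>a\<in>S. cnj (v a) * B a k) = cnj ?y"
    by (simp add: psd_on_hermitian[OF psd fin _ k] mult.commute)
  have "quad_form S (\<lambda>a b. B a b - B a k * B k b / B k k) v
      = quad_form S B v - (\<Sum>a\<in>S. \<Sum>b\<in>S. cnj (v a) * B a k * (B k b * v b) / B k k)"
    unfolding quad_form_def by (simp add: algebra_simps sum_subtractf)
  also have "(\<Sum>a\<in>S. \<Sum>b\<in>S. cnj (v a) * B a k * (B k b * v b) / B k k)
      = cnj ?y * ?y / B k k"
    unfolding col[symmetric] by (simp add: sum_product sum_divide_distrib mult.assoc)
  also have "quad_form S B v - cnj ?y * ?y / B k k
      = quad_form S B (\<lambda>a. v a + (- ?y / B k k) * unit_vec k a)"
    unfolding quad_form_add_unit_vec[OF fin k] col using nz real by (simp add: field_simps)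
  finally show "quad_form S (\<lambda>a b. B a b - B a k * B k b / B k k) v \<in> \<real> \<and>
      0 \<le> Re (quad_form S (\<lambda>a b. B a b - B a k * B k b / B k k) v)"
    using psd by (simp add: psd_on_quad_form)
qed

lemma psd_on_entry_bound:
  assumes psd: "psd_on S M" and fin: "finite S" and a: "a \<in> S" and b: "b \<in> S"
  shows "(cmod (M a b))\<^sup>2 \<le> Re (M a a) * Re (M b b)"
proof (cases "M a a = 0")
  case True
  then show ?thesis using psd_on_zero_diag[OF assms True] by simp
next
  case False
  obtain \<alpha> where \<alpha>: "M a a = of_real \<alpha>" using psd_on_diag(1)[OF psd fin a] by (auto elim: Reals_cases)
  have pos: "0 < \<alpha>" using psd_on_diag(2)[OF psd fin a] False \<alpha> by (simp add: less_eq_real_def)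
  have "M b a * M a b = of_real ((cmod (M a b))\<^sup>2)"
    using psd_on_hermitian[OF psd fin b a] by (metis complex_norm_square mult.commute)
  then have "Re (M b b - M b a * M a b / M a a) = Re (M b b) - (cmod (M a b))\<^sup>2 / \<alpha>"
    unfolding \<alpha> by (simp add: Re_divide_of_real del: of_real_power)
  moreover have "0 \<le> Re (M b b - M b a * M a b / M a a)"
    using psd_on_diag(2)[OF psd_on_schur_complement[OF psd fin a False] fin b] by simp
  ultimately show ?thesis using pos \<alpha> by (simp add: field_simps)
qed

lemma psd_on_restrict_Suc:
  assumes "psd_on {..<Suc n} M"
  shows "psd_on {..<n} M"
  unfolding psd_on_iff_quad_form
proof
  fix v
  have "quad_form {..<n} M v = quad_form {..<Suc n} M (\<lambda>x. if x < n then v x else 0)"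
    unfolding quad_form_def by (simp add: lessThan_Suc sum.distrib)
  then show "quad_form {..<n} M v \<in> \<real> \<and> 0 \<le> Re (quad_form {..<n} M v)"
    using assms by (simp add: psd_on_quad_form)
qed

lemma psd_on_real_quad_nonneg:
  assumes "psd_on S (\<lambda>a b. complex_of_real (A a b))"
  shows "0 \<le> (\<Sum>a\<in>S. \<Sum>b\<in>S. V a * A a b * V b)"
proof -
  have "quad_form S (\<lambda>a b. complex_of_real (A a b)) (\<lambda>a. of_real (V a))
      = of_real (\<Sum>a\<in>S. \<Sum>b\<in>S. V a * A a b * V b)"
    by (simp add: quad_form_def)
  then show ?thesis using psd_on_quad_form(2)[OF assms, of "\<lambda>a. of_real (V a)"] by simp
qed

lemma psd_on_cong:
  "(\<And>a b. a \<in> S \<Longrightarrow> b \<in> S \<Longrightarrow> M a b = N a b) \<Longrightarrow> psd_on S M \<longleftrightarrow> psd_on S N"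
  unfolding psd_on_def by simp

lemma psd_on_zero: "psd_on S (\<lambda>a b. 0)"
  by (simp add: psd_on_def)

lemma psd_on_nonneg_combination:
  fixes n :: nat
  assumes "\<forall>m<n. 0 \<le> p m" "\<forall>m<n. psd_on S (M m)"
  shows "psd_on S (\<lambda>a b. \<Sum>m<n. complex_of_real (p m) * M m a b)"
  using assms
proof (induction n)
  case 0
  then show ?case by (simp add: psd_on_zero)
next
  case (Suc n)
  have "psd_on S (\<lambda>a b. (\<Sum>m<n. complex_of_real (p m) * M m a b) + complex_of_real (p n) * M n a b)"
    using Suc by (intro psd_on_add psd_on_scale) simp_all
  then show ?case by simp
qed

lemma psd_on_principal_submatrix:
  assumes psd: "psd_on S M" and fin: "finite S" and inj: "inj_on f T" and sub: "f ` T \<subseteq> S"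
  shows "psd_on T (\<lambda>x y. M (f x) (f y))"
  unfolding psd_on_iff_quad_form
proof
  fix v
  define w :: "_ \<Rightarrow> complex" where "w a = (if a \<in> f ` T then v (the_inv_into T f a) else 0)" for a
  have w: "w (f x) = v x" if "x \<in> T" for x
    using that inj by (simp add: w_def the_inv_into_f_f)
  have zero: "w a = 0" if "a \<notin> f ` T" for a using that by (simp add: w_def)
  have "quad_form S M w = (\<Sum>a\<in>f ` T. \<Sum>b\<in>S. cnj (w a) * M a b * w b)"
    unfolding quad_form_def using fin sub by (intro sum.mono_neutral_right) (auto simp: zero)
  also have "\<dots> = (\<Sum>a\<in>f ` T. \<Sum>b\<in>f ` T. cnj (w a) * M a b * w b)"
    using fin sub by (intro sum.cong refl sum.mono_neutral_right) (auto simp: zero)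
  also have "\<dots> = quad_form T (\<lambda>x y. M (f x) (f y)) v"
    unfolding quad_form_def using inj by (simp add: sum.reindex w)
  finally show "quad_form T (\<lambda>x y. M (f x) (f y)) v \<in> \<real> \<and> 0 \<le> Re (quad_form T (\<lambda>x y. M (f x) (f y)) v)"
    using psd by (metis psd_on_quad_form)
qed

lemma sum_swap_middle:
  "(\<Sum>i\<in>A. \<Sum>j\<in>B. \<Sum>k\<in>C. f i j k) = (\<Sum>i\<in>A. \<Sum>k\<in>C. \<Sum>j\<in>B. f i j k)"
  by (rule sum.cong[OF refl], rule sum.swap)

lemma psd_on_congruence:
  assumes "psd_on S A"
  shows "psd_on T (\<lambda>j l. \<Sum>i\<in>S. \<Sum>k\<in>S. cnj (V i j) * A i k * V k l)"
  unfolding psd_on_iff_quad_form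
proof
  fix w
  let ?F = "\<lambda>i j k l. cnj (V i j * w j) * A i k * (V k l * w l)"
  have "quad_form T (\<lambda>j l. \<Sum>i\<in>S. \<Sum>k\<in>S. cnj (V i j) * A i k * V k l) w
      = (\<Sum>j\<in>T. \<Sum>l\<in>T. \<Sum>i\<in>S. \<Sum>k\<in>S. ?F i j k l)"
    unfolding quad_form_def by (simp add: sum_distrib_left sum_distrib_right ac_simps)
  also have "\<dots> = (\<Sum>j\<in>T. \<Sum>i\<in>S. \<Sum>k\<in>S. \<Sum>l\<in>T. ?F i j k l)"
    by (rule sum.cong[OF refl], subst sum.swap, rule sum_swap_middle)
  also have "\<dots> = (\<Sum>i\<in>S. \<Sum>k\<in>S. \<Sum>j\<in>T. \<Sum>l\<in>T. ?F i j k l)"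
    by (subst sum.swap, rule sum_swap_middle)
  also have "\<dots> = quad_form S A (\<lambda>i. \<Sum>j\<in>T. V i j * w j)"
    unfolding quad_form_def by (simp add: sum_distrib_left sum_distrib_right ac_simps)
  finally show "quad_form T (\<lambda>j l. \<Sum>i\<in>S. \<Sum>k\<in>S. cnj (V i j) * A i k * V k l) w \<in> \<real> \<and>
      0 \<le> Re (quad_form T (\<lambda>j l. \<Sum>i\<in>S. \<Sum>k\<in>S. cnj (V i j) * A i k * V k l) w)"
    using assms by (simp add: psd_on_quad_form)
qed

definition trace_mult :: "nat \<Rightarrow> (nat \<Rightarrow> nat \<Rightarrow> complex) \<Rightarrow> (nat \<Rightarrow> nat \<Rightarrow> complex) \<Rightarrow> complex" where
  "trace_mult n C B = (\<Sum>j<n. \<Sum>l<n. C j l * B l j)"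

lemma trace_mult_eq_restrict:
  assumes "\<And>j. j < Suc n \<Longrightarrow> B n j = 0" "\<And>j. j < Suc n \<Longrightarrow> B j n = 0"
  shows "trace_mult (Suc n) C B = trace_mult n C B"
  using assms by (simp add: trace_mult_def)

lemma trace_mult_split_column:
  assumes psd: "psd_on {..<Suc n} B"
  shows "trace_mult (Suc n) C B
    = trace_mult (Suc n) C (\<lambda>l j. B l j - B l n * B n j / B n n) + quad_form {..<Suc n} C (\<lambda>l. B l n) / B n n"
proof -
  let ?S = "{..<Suc n}"
  have "trace_mult (Suc n) C B - trace_mult (Suc n) C (\<lambda>l j. B l j - B l n * B n j / B n n)
      = (\<Sum>j\<in>?S. \<Sum>l\<in>?S. C j l * (B l n * B n j / B n n))"
    unfolding trace_mult_def by (simp add: algebra_simps sum_subtractf del: sum.lessThan_Suc)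
  also have "\<dots> = (\<Sum>j\<in>?S. \<Sum>l\<in>?S. cnj (B j n) * C j l * B l n / B n n)"
  proof (intro sum.cong refl)
    fix j l assume "j \<in> ?S"
    then have "B n j = cnj (B j n)" by (intro psd_on_hermitian[OF psd]) auto
    then show "C j l * (B l n * B n j / B n n) = cnj (B j n) * C j l * B l n / B n n" by simp
  qed
  also have "\<dots> = quad_form ?S C (\<lambda>l. B l n) / B n n"
    unfolding quad_form_def by (simp add: sum_divide_distrib del: sum.lessThan_Suc)
  finally show ?thesis by (simp add: algebra_simps)
qed

lemma trace_mult_psd_nonneg:
  "psd_on {..<n} B \<Longrightarrow> psd_on {..<n} C \<Longrightarrow> trace_mult n C B \<in> \<real> \<and> 0 \<le> Re (trace_mult n C B)"
proof (induction n arbitrary: B)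
  case 0
  then show ?case by (simp add: trace_mult_def)
next
  case (Suc n)
  let ?S = "{..<Suc n}"
  have fin: "finite ?S" and n: "n \<in> ?S" by auto
  have zero_corner: "trace_mult (Suc n) C B' \<in> \<real> \<and> 0 \<le> Re (trace_mult (Suc n) C B')"
    if psd: "psd_on ?S B'" and z: "B' n n = 0" for B'
  proof -
    have "trace_mult (Suc n) C B' = trace_mult n C B'"
      by (rule trace_mult_eq_restrict; rule psd_on_zero_diag[OF psd fin n _ z]; simp)
    then show ?thesis
      using Suc.IH[OF psd_on_restrict_Suc[OF psd] psd_on_restrict_Suc[OF Suc.prems(2)]] by simp
  qed
  show ?case
  proof (cases "B n n = 0")
    case True
    then show ?thesis using zero_corner[OF Suc.prems(1)] by simp
  next
    case False
    obtain \<beta> where \<beta>: "B n n = of_real \<beta>" using psd_on_diag(1)[OF Suc.prems(1) fin n] by (auto elim: Reals_cases)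
    have pos: "0 < \<beta>" using psd_on_diag(2)[OF Suc.prems(1) fin n] False \<beta> by (simp add: less_eq_real_def)
    \<comment> \<open>the Schur complement has a zero corner, and the split-off part contributes a value of the form of C\<close>
    have "trace_mult (Suc n) C (\<lambda>l j. B l j - B l n * B n j / B n n) \<in> \<real> \<and>
        0 \<le> Re (trace_mult (Suc n) C (\<lambda>l j. B l j - B l n * B n j / B n n))"
      using zero_corner[OF psd_on_schur_complement[OF Suc.prems(1) fin n False]] False by simp
    moreover have "quad_form ?S C (\<lambda>l. B l n) \<in> \<real>" "0 \<le> Re (quad_form ?S C (\<lambda>l. B l n))"
      using Suc.prems(2) by (simp_all add: psd_on_quad_form)
    ultimately show ?thesis
      unfolding trace_mult_split_column[OF Suc.prems(1)] \<beta> using pos by (simp add: Reals_add flip: of_real_divide)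
  qed
qed

section \<open>Separable states are PPT\<close>

lemma sum_bidx: "(\<Sum>a\<in>bidx d. f a) = (\<Sum>i<d. \<Sum>j<d. f (i, j))"
  by (simp add: bidx_def sum.cartesian_product)

lemma bidx_iff [simp]: "(i, j) \<in> bidx d \<longleftrightarrow> i < d \<and> j < d"
  by (simp add: bidx_def)

lemma psd_on_partial_transpose_product:
  assumes A: "psd_on {..<d} A" and B: "psd_on {..<d} B"
  shows "psd_on (bidx d) (partial_transpose_B (\<lambda>(i, j) (k, l). A i k * B j l))"
  unfolding psd_on_iff_quad_form
proof
  fix v
  let ?F = "\<lambda>i j k l. cnj (v (i, j)) * (A i k * B l j) * v (k, l)"
  define C where "C j l = (\<Sum>i<d. \<Sum>k<d. cnj (v (i, j)) * A i k * v (k, l))" for j l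
  \<comment> \<open>\<open>(A \<otimes> B)\<^sup>T\<^sup>B = A \<otimes> B\<^sup>T\<close>, whose form at v is \<open>tr (C B)\<close> for the congruence C of A by v\<close>
  have "quad_form (bidx d) (partial_transpose_B (\<lambda>(i, j) (k, l). A i k * B j l)) v
      = (\<Sum>i<d. \<Sum>j<d. \<Sum>k<d. \<Sum>l<d. ?F i j k l)"
    unfolding quad_form_def sum_bidx partial_transpose_B_def by simp
  also have "\<dots> = (\<Sum>j<d. \<Sum>i<d. \<Sum>k<d. \<Sum>l<d. ?F i j k l)"
    by (rule sum.swap)
  also have "\<dots> = (\<Sum>j<d. \<Sum>i<d. \<Sum>l<d. \<Sum>k<d. ?F i j k l)"
    by (rule sum.cong[OF refl], rule sum_swap_middle)
  also have "\<dots> = (\<Sum>j<d. \<Sum>l<d. \<Sum>i<d. \<Sum>k<d. ?F i j k l)"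
    by (rule sum.cong[OF refl], rule sum.swap)
  also have "\<dots> = trace_mult d C B"
    unfolding trace_mult_def C_def by (simp add: sum_distrib_left sum_distrib_right ac_simps)
  finally show "quad_form (bidx d) (partial_transpose_B (\<lambda>(i, j) (k, l). A i k * B j l)) v \<in> \<real> \<and>
      0 \<le> Re (quad_form (bidx d) (partial_transpose_B (\<lambda>(i, j) (k, l). A i k * B j l)) v)"
    using trace_mult_psd_nonneg[OF B] psd_on_congruence[OF A, of "{..<d}" "\<lambda>i j. v (i, j)"]
    unfolding C_def by simp
qed

lemma separable_imp_PPT:
  assumes "separable d \<rho>"
  shows "PPT d \<rho>"
proof -
  obtain n :: nat and p :: "nat \<Rightarrow> real" and A B where p: "\<forall>m<n. 0 \<le> p m"
    and dens: "\<forall>m<n. density_on {..<d} (A m) \<and> density_on {..<d} (B m)"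
    and \<rho>: "\<forall>i<d. \<forall>j<d. \<forall>k<d. \<forall>l<d. \<rho> (i, j) (k, l) = (\<Sum>m<n. complex_of_real (p m) * A m i k * B m j l)"
    using assms unfolding separable_def by blast
  have "psd_on (bidx d) (\<lambda>a b. \<Sum>m<n. complex_of_real (p m) *
      partial_transpose_B (\<lambda>(i, j) (k, l). A m i k * B m j l) a b)"
    using p dens by (intro psd_on_nonneg_combination)
      (auto simp: density_on_def intro!: psd_on_partial_transpose_product)
  then show ?thesis
    unfolding PPT_def
    by (subst psd_on_cong[where N = "\<lambda>a b. \<Sum>m<n. complex_of_real (p m) *
        partial_transpose_B (\<lambda>(i, j) (k, l). A m i k * B m j l) a b"])
      (auto simp: partial_transpose_B_def \<rho> mult.assoc)
qed

section \<open>Doubly nonnegative matrices of order at most 4 are completely positive\<close>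

definition doubly_nonneg :: "nat \<Rightarrow> (nat \<Rightarrow> nat \<Rightarrow> real) \<Rightarrow> bool" where
  "doubly_nonneg n A \<longleftrightarrow> psd_on {..<n} (\<lambda>i j. complex_of_real (A i j)) \<and> (\<forall>i<n. \<forall>j<n. 0 \<le> A i j)"

definition completely_pos :: "nat \<Rightarrow> (nat \<Rightarrow> nat \<Rightarrow> real) \<Rightarrow> bool" where
  "completely_pos n A \<longleftrightarrow> (\<exists>U. (\<forall>u\<in>set U. \<forall>i. 0 \<le> u i) \<and> (\<forall>i<n. \<forall>j<n. A i j = (\<Sum>u\<leftarrow>U. u i * u j)))"

lemma doubly_nonneg_nonneg: "doubly_nonneg n A \<Longrightarrow> i < n \<Longrightarrow> j < n \<Longrightarrow> 0 \<le> A i j"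
  by (simp add: doubly_nonneg_def)

lemma doubly_nonneg_sym: "doubly_nonneg n A \<Longrightarrow> i < n \<Longrightarrow> j < n \<Longrightarrow> A j i = A i j"
  using psd_on_hermitian[of "{..<n}" "\<lambda>i j. complex_of_real (A i j)" i j]
  by (simp add: doubly_nonneg_def)

lemma doubly_nonneg_quad_nonneg: "doubly_nonneg n A \<Longrightarrow> 0 \<le> (\<Sum>i<n. \<Sum>j<n. V i * A i j * V j)"
  unfolding doubly_nonneg_def by (blast intro: psd_on_real_quad_nonneg)

lemma doubly_nonneg_entry_bound:
  assumes "doubly_nonneg n A" "i < n" "j < n"
  shows "(A i j)\<^sup>2 \<le> A i i * A j j"
  using psd_on_entry_bound[of "{..<n}" "\<lambda>i j. complex_of_real (A i j)" i j] assms
  by (simp add: doubly_nonneg_def)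

lemma doubly_nonneg_diag_pos:
  assumes "doubly_nonneg n A" "i < n" "j < n" "0 < A i j"
  shows "0 < A i i" "0 < A j j"
proof -
  have "0 < (A i j)\<^sup>2" using assms(4) by simp
  also have "\<dots> \<le> A i i * A j j" by (rule doubly_nonneg_entry_bound[OF assms(1-3)])
  finally show "0 < A i i" "0 < A j j"
    using doubly_nonneg_nonneg[OF assms(1)] assms(2,3) by (metis less_eq_real_def mult_zero_left mult_zero_right)+
qed

lemma completely_pos_zero: "\<forall>i<n. \<forall>j<n. A i j = 0 \<Longrightarrow> completely_pos n A"
  unfolding completely_pos_def by (intro exI[of _ "[]"]) simp

lemma completely_pos_add_rank1:
  assumes "completely_pos n A'" "\<forall>i. 0 \<le> u i" "\<forall>i<n. \<forall>j<n. A i j = A' i j + u i * u j"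
  shows "completely_pos n A"
proof -
  obtain U where "\<forall>v\<in>set U. \<forall>i. 0 \<le> v i" "\<forall>i<n. \<forall>j<n. A' i j = (\<Sum>v\<leftarrow>U. v i * v j)"
    using assms(1) unfolding completely_pos_def by blast
  then show ?thesis
    unfolding completely_pos_def using assms(2,3) by (intro exI[of _ "u # U"]) auto
qed

definition matrix_support :: "nat \<Rightarrow> (nat \<Rightarrow> nat \<Rightarrow> real) \<Rightarrow> (nat \<times> nat) set" where
  "matrix_support n A = {(i, j). i < n \<and> j < n \<and> A i j \<noteq> 0}"

lemma finite_matrix_support: "finite (matrix_support n A)"
  by (rule finite_subset[of _ "{..<n} \<times> {..<n}"]) (auto simp: matrix_support_def)

definition simplicial :: "nat \<Rightarrow> (nat \<Rightarrow> nat \<Rightarrow> real) \<Rightarrow> nat \<Rightarrow> bool" where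
  "simplicial n A k \<longleftrightarrow> (\<forall>i<n. \<forall>j<n. i \<noteq> k \<longrightarrow> j \<noteq> k \<longrightarrow> i \<noteq> j \<longrightarrow> 0 < A k i \<longrightarrow> 0 < A k j \<longrightarrow> 0 < A i j)"

lemma obtain_largest_step:
  fixes r :: "'a \<Rightarrow> real"
  assumes "finite I" "\<forall>x\<in>I. 0 < r x"
  obtains t where "0 < t" "t \<le> 1" "\<forall>x\<in>I. t \<le> r x" "t = 1 \<or> (\<exists>x\<in>I. t = r x)"
proof
  let ?T = "insert 1 (r ` I)"
  have fin: "finite ?T" using assms(1) by simp
  show "0 < Min ?T" using fin assms(2) by simp
  show "Min ?T \<le> 1" "\<forall>x\<in>I. Min ?T \<le> r x" using fin by auto
  show "Min ?T = 1 \<or> (\<exists>x\<in>I. Min ?T = r x)" using Min_in[OF fin] by auto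
qed

lemma doubly_nonneg_subtract_rank1:
  assumes A: "doubly_nonneg n A" and k: "k < n" and akk: "0 < A k k" and t: "0 \<le> t" "t \<le> 1"
    and off: "\<forall>i<n. \<forall>j<n. i \<noteq> k \<longrightarrow> j \<noteq> k \<longrightarrow> i \<noteq> j \<longrightarrow> t * A k i * A k j \<le> A i j * A k k"
  shows "doubly_nonneg n (\<lambda>i j. A i j - t * A k i * A k j / A k k)"
proof -
  let ?a = "A k k"
  note sym = doubly_nonneg_sym[OF A] and nn = doubly_nonneg_nonneg[OF A]
  have nonneg: "0 \<le> A i j - t * A k i * A k j / ?a" if ij: "i < n" "j < n" for i j
  proof -
    consider "i = k" | "j = k" | "i = j" | "i \<noteq> k" "j \<noteq> k" "i \<noteq> j" by blast
    then show ?thesis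
    proof cases
      case 1
      then show ?thesis using nn[OF k ij(2)] t akk by (simp add: field_simps mult_left_le_one_le)
    next
      case 2
      then show ?thesis using nn[OF ij(1) k] sym[OF ij(1) k] t akk by (simp add: field_simps mult_left_le_one_le)
    next
      case 3
      have "t * A k i * A k i / ?a \<le> A k i * A k i / ?a"
        using t akk by (intro divide_right_mono mult_right_mono) (auto simp: nn[OF k ij(1)] mult_left_le_one_le)
      also have "\<dots> \<le> A i i"
        using doubly_nonneg_entry_bound[OF A k ij(1)] akk by (simp add: field_simps power2_eq_square)
      finally show ?thesis using 3 by simp
    next
      case 4
      then show ?thesis using off ij akk by (simp add: field_simps)
    qed
  qed
  let ?C = "\<lambda>i j. complex_of_real (A i j)"
  \<comment> \<open>the result is the Schur complement \<open>A - A\<^sub>k A\<^sub>k\<^sup>T / a\<close> plus the rank-one term \<open>(1 - t)/a \<cdot> A\<^sub>k A\<^sub>k\<^sup>T\<close>\<close>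
  have "psd_on {..<n} (\<lambda>i j. ?C i j - ?C i k * ?C k j / ?C k k)"
    using A akk k by (intro psd_on_schur_complement) (simp_all add: doubly_nonneg_def)
  moreover have "psd_on {..<n} (\<lambda>i j. complex_of_real ((1 - t) / ?a) * (?C k i * cnj (?C k j)))"
    using t akk by (intro psd_on_scale[OF psd_on_rank1]) simp
  ultimately have "psd_on {..<n} (\<lambda>i j. (?C i j - ?C i k * ?C k j / ?C k k)
      + complex_of_real ((1 - t) / ?a) * (?C k i * cnj (?C k j)))"
    by (rule psd_on_add)
  moreover have "(?C i j - ?C i k * ?C k j / ?C k k) + complex_of_real ((1 - t) / ?a) * (?C k i * cnj (?C k j))
      = complex_of_real (A i j - t * A k i * A k j / ?a)" if "i < n" "j < n" for i j
    using sym[OF that(1) k] akk by (simp add: field_simps)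
  ultimately show ?thesis using nonneg by (subst (asm) psd_on_cong) (auto simp: doubly_nonneg_def)
qed

lemma doubly_nonneg_peel_simplicial:
  assumes A: "doubly_nonneg n A" and k: "k < n" and akk: "0 < A k k" and smp: "simplicial n A k"
  obtains A' u where "doubly_nonneg n A'" "\<forall>i. 0 \<le> u i" "\<forall>i<n. \<forall>j<n. A i j = A' i j + u i * u j"
    "matrix_support n A' \<subset> matrix_support n A"
proof -
  let ?a = "A k k"
  note nn = doubly_nonneg_nonneg[OF A]
  define I where "I = {(i, j). i < n \<and> j < n \<and> i \<noteq> k \<and> j \<noteq> k \<and> i \<noteq> j \<and> 0 < A k i \<and> 0 < A k j}"
  define r where "r = (\<lambda>(i, j). A i j * ?a / (A k i * A k j))"
  \<comment> \<open>subtract the largest multiple \<open>t/a\<close> of \<open>A\<^sub>k A\<^sub>k\<^sup>T\<close> keeping all entries nonnegative;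
    at the optimum either the diagonal entry k or some entry between neighbours of k vanishes\<close>
  have "finite I" by (rule finite_subset[of _ "{..<n} \<times> {..<n}"]) (auto simp: I_def)
  moreover have "\<forall>x\<in>I. 0 < r x" using smp akk by (auto simp: I_def r_def simplicial_def)
  ultimately obtain t where t: "0 < t" "t \<le> 1" and tI: "\<forall>x\<in>I. t \<le> r x"
    and t_opt: "t = 1 \<or> (\<exists>x\<in>I. t = r x)"
    by (rule obtain_largest_step)
  define A' where "A' i j = A i j - t * A k i * A k j / ?a" for i j
  define u where "u i = (if i < n then sqrt (t / ?a) * A k i else 0)" for i
  have u: "\<forall>i. 0 \<le> u i" using nn k t akk by (auto simp: u_def)
  have dec: "\<forall>i<n. \<forall>j<n. A i j = A' i j + u i * u j"
    using t akk by (auto simp: A'_def u_def algebra_simps)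
  have "t * A k i * A k j \<le> A i j * ?a" if "i < n" "j < n" "i \<noteq> k" "j \<noteq> k" "i \<noteq> j" for i j
  proof (cases "(i, j) \<in> I")
    case True
    with tI have "t \<le> A i j * ?a / (A k i * A k j)" by (auto simp: r_def)
    then show ?thesis using True akk by (simp add: I_def field_simps)
  next
    case False
    then have "A k i = 0 \<or> A k j = 0" using that nn[OF k] by (auto simp: I_def less_eq_real_def)
    then show ?thesis using nn that akk by auto
  qed
  then have A': "doubly_nonneg n A'"
    unfolding A'_def using t by (intro doubly_nonneg_subtract_rank1[OF A k akk]) auto
  have "matrix_support n A' \<subseteq> matrix_support n A"
  proof
    fix x assume "x \<in> matrix_support n A'"
    then obtain i j where x: "x = (i, j)" "i < n" "j < n" "A' i j \<noteq> 0"
      by (auto simp: matrix_support_def)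
    have "A' i j \<le> A i j" using dec u x(2,3) by (simp add: zero_le_mult_iff)
    then show "x \<in> matrix_support n A"
      using doubly_nonneg_nonneg[OF A' x(2,3)] x by (auto simp: matrix_support_def)
  qed
  moreover have "matrix_support n A' \<noteq> matrix_support n A"
    using t_opt
  proof
    assume "t = 1"
    then have "(k, k) \<in> matrix_support n A - matrix_support n A'"
      using k akk by (simp add: matrix_support_def A'_def)
    then show ?thesis by blast
  next
    assume "\<exists>x\<in>I. t = r x"
    then obtain i j where "(i, j) \<in> I" "t = A i j * ?a / (A k i * A k j)" by (auto simp: r_def)
    moreover have "0 < A i j" using \<open>(i, j) \<in> I\<close> smp by (auto simp: I_def simplicial_def)
    ultimately have "(i, j) \<in> matrix_support n A - matrix_support n A'"
      using akk by (auto simp: matrix_support_def A'_def I_def field_simps)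
    then show ?thesis by blast
  qed
  ultimately show ?thesis using that A' u dec by blast
qed

lemma obtain_edge_factors:
  fixes e vi vj :: real
  assumes "0 \<le> e" "0 < vi" "0 < vj"
  obtains g g' where "0 \<le> g" "0 \<le> g'" "g * g' = e" "g' * g = e" "g * g = e * vj / vi" "g' * g' = e * vi / vj"
proof
  have "sqrt (e * vj / vi) * sqrt (e * vi / vj) = sqrt ((e * vj / vi) * (e * vi / vj))"
    by (rule real_sqrt_mult[symmetric])
  also have "(e * vj / vi) * (e * vi / vj) = e * e" using assms by (simp add: field_simps)
  finally show "sqrt (e * vj / vi) * sqrt (e * vi / vj) = e" "sqrt (e * vi / vj) * sqrt (e * vj / vi) = e"
    using assms by (simp_all add: mult.commute)
qed (use assms in \<open>simp_all add: divide_nonneg_pos\<close>)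

lemma dominance_slack_nonneg:
  fixes a b c v w1 w2 :: real
  assumes "0 < v" "a * w1 + b * w2 \<le> c * v"
  shows "0 \<le> c - a * w1 / v - b * w2 / v"
proof -
  have "c - a * w1 / v - b * w2 / v = (c * v - a * w1 - b * w2) / v" using assms(1) by (simp add: field_simps)
  then show ?thesis using assms by simp
qed

definition pair_vec :: "nat \<Rightarrow> nat \<Rightarrow> real \<Rightarrow> real \<Rightarrow> nat \<Rightarrow> real" where
  "pair_vec i j g g' = (\<lambda>m. if m = i then g else if m = j then g' else 0)"

text \<open>A symmetric nonnegative matrix supported on a 4-cycle \<open>p q r s\<close> that is diagonally dominant
  after a positive diagonal scaling v splits into one rank-one term \<open>\<sqrt>(A\<^sub>i\<^sub>j v\<^sub>j/v\<^sub>i) e\<^sub>i + \<sqrt>(A\<^sub>i\<^sub>j v\<^sub>i/v\<^sub>j) e\<^sub>j\<close>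
  per edge plus a nonnegative diagonal.\<close>
lemma cycle4_completely_pos_of_dominance:
  assumes set: "{..<n} = {p, q, r, s}" and dist: "distinct [p, q, r, s]"
    and sym: "\<forall>i<n. \<forall>j<n. A j i = A i j"
    and edges: "0 \<le> A p q" "0 \<le> A q r" "0 \<le> A r s" "0 \<le> A s p" and chords: "A p r = 0" "A q s = 0"
    and v: "0 < v p" "0 < v q" "0 < v r" "0 < v s"
    and dom: "A p q * v q + A s p * v s \<le> A p p * v p" "A p q * v p + A q r * v r \<le> A q q * v q"
      "A q r * v q + A r s * v s \<le> A r r * v r" "A r s * v r + A s p * v p \<le> A s s * v s"
  shows "completely_pos n A"
proof -
  have in_n: "p < n" "q < n" "r < n" "s < n" using set by auto
  define hp where "hp = A p p - A p q * v q / v p - A s p * v s / v p"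
  define hq where "hq = A q q - A p q * v p / v q - A q r * v r / v q"
  define hr where "hr = A r r - A q r * v q / v r - A r s * v s / v r"
  define hs where "hs = A s s - A r s * v r / v s - A s p * v p / v s"
  have slack: "0 \<le> hp" "0 \<le> hq" "0 \<le> hr" "0 \<le> hs"
    using dominance_slack_nonneg[OF v(1) dom(1)] dominance_slack_nonneg[OF v(2) dom(2)]
      dominance_slack_nonneg[OF v(3) dom(3)] dominance_slack_nonneg[OF v(4) dom(4)]
    by (simp_all only: hp_def hq_def hr_def hs_def)
  obtain g1 g2 where g12: "0 \<le> g1" "0 \<le> g2" "g1 * g2 = A p q" "g2 * g1 = A p q"
      "g1 * g1 = A p q * v q / v p" "g2 * g2 = A p q * v p / v q"
    using obtain_edge_factors[OF edges(1) v(1,2)] .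
  obtain g3 g4 where g34: "0 \<le> g3" "0 \<le> g4" "g3 * g4 = A q r" "g4 * g3 = A q r"
      "g3 * g3 = A q r * v r / v q" "g4 * g4 = A q r * v q / v r"
    using obtain_edge_factors[OF edges(2) v(2,3)] .
  obtain g5 g6 where g56: "0 \<le> g5" "0 \<le> g6" "g5 * g6 = A r s" "g6 * g5 = A r s"
      "g5 * g5 = A r s * v s / v r" "g6 * g6 = A r s * v r / v s"
    using obtain_edge_factors[OF edges(3) v(3,4)] .
  obtain g7 g8 where g78: "0 \<le> g7" "0 \<le> g8" "g7 * g8 = A s p" "g8 * g7 = A s p"
      "g7 * g7 = A s p * v p / v s" "g8 * g8 = A s p * v s / v p"
    using obtain_edge_factors[OF edges(4) v(4,1)] .
  define U where "U = [pair_vec p q g1 g2, pair_vec q r g3 g4, pair_vec r s g5 g6, pair_vec s p g7 g8,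
    pair_vec p p (sqrt hp) 0, pair_vec q q (sqrt hq) 0, pair_vec r r (sqrt hr) 0, pair_vec s s (sqrt hs) 0]"
  have nonneg: "\<forall>u\<in>set U. \<forall>i. 0 \<le> u i"
    using g12 g34 g56 g78 slack by (auto simp: U_def pair_vec_def)
  have sym_entries: "A q p = A p q" "A r q = A q r" "A s r = A r s" "A p s = A s p" "A r p = 0" "A s q = 0"
    using sym in_n chords by metis+
  have neq: "p \<noteq> q" "p \<noteq> r" "p \<noteq> s" "q \<noteq> r" "q \<noteq> s" "r \<noteq> s"
    "q \<noteq> p" "r \<noteq> p" "s \<noteq> p" "r \<noteq> q" "s \<noteq> q" "s \<noteq> r"
    using dist by auto
  have diag: "\<bar>hp\<bar> = hp" "\<bar>hq\<bar> = hq" "\<bar>hr\<bar> = hr" "\<bar>hs\<bar> = hs"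
    using slack by simp_all
  have entries: "A i j = (\<Sum>u\<leftarrow>U. u i * u j)" if "i \<in> {p, q, r, s}" "j \<in> {p, q, r, s}" for i j
    using that
    by (elim insertE emptyE; simp add: U_def pair_vec_def neq g12 g34 g56 g78 diag sym_entries chords;
        simp add: hp_def hq_def hr_def hs_def)
  have "\<forall>i<n. \<forall>j<n. A i j = (\<Sum>u\<leftarrow>U. u i * u j)"
  proof (intro allI impI)
    fix i j assume "i < n" "j < n"
    then have "i \<in> {p, q, r, s}" "j \<in> {p, q, r, s}" using set by blast+
    then show "A i j = (\<Sum>u\<leftarrow>U. u i * u j)" by (rule entries)
  qed
  then show ?thesis unfolding completely_pos_def using nonneg by blast
qed

lemma binary_form_nonneg:
  fixes \<alpha> \<beta> \<gamma> :: real
  assumes nonneg: "\<And>s t. 0 \<le> \<alpha> * s * s + \<beta> * t * t - 2 * \<gamma> * s * t" and \<gamma>: "0 < \<gamma>"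
  shows "0 < \<alpha>" "0 < \<beta>" "\<gamma> \<le> sqrt \<alpha> * sqrt \<beta>"
proof -
  show \<alpha>: "0 < \<alpha>"
  proof (rule ccontr)
    assume "\<not> 0 < \<alpha>"
    with nonneg[of 1 0] have "\<alpha> = 0" by simp
    with nonneg[of "(\<beta> + 1) / (2 * \<gamma>)" 1] \<gamma> show False by (simp add: field_simps)
  qed
  show \<beta>: "0 < \<beta>"
  proof (rule ccontr)
    assume "\<not> 0 < \<beta>"
    with nonneg[of 0 1] have "\<beta> = 0" by simp
    with nonneg[of 1 "(\<alpha> + 1) / (2 * \<gamma>)"] \<gamma> show False by (simp add: field_simps)
  qed
  let ?m = "sqrt \<alpha> * sqrt \<beta>"
  have "\<gamma> * ?m \<le> ?m * ?m"
    using nonneg[of "sqrt \<beta>" "sqrt \<alpha>"] \<alpha> \<beta> by (simp add: algebra_simps)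
  then show "\<gamma> \<le> ?m" using \<alpha> \<beta> by (simp add: mult_le_cancel_right)
qed

lemma cycle4_scaling:
  assumes A: "doubly_nonneg n A" and set: "{..<n} = {p, q, r, s}" and dist: "distinct [p, q, r, s]"
    and pos: "0 < A p q" "0 < A q r" "0 < A r s" "0 < A s p" and chords: "A p r = 0" "A q s = 0"
  obtains v where "0 < v p" "0 < v q" "0 < v r" "0 < v s"
    "A p q * v q + A s p * v s \<le> A p p * v p" "A p q * v p + A q r * v r \<le> A q q * v q"
    "A q r * v q + A r s * v s \<le> A r r * v r" "A r s * v r + A s p * v p \<le> A s s * v s"
proof -
  have in_n: "p < n" "q < n" "r < n" "s < n" using set by auto
  note sym = doubly_nonneg_sym[OF A]
  define a b c d where "a = A p p" "b = A q q" "c = A r r" "d = A s s"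
  define x y z w where "x = A p q" "y = A q r" "z = A r s" "w = A s p"
  have xyzw: "0 < x" "0 < y" "0 < z" "0 < w" using pos by (simp_all add: x_y_z_w_def)
  have abcd: "0 < a" "0 < b" "0 < c" "0 < d"
    using doubly_nonneg_diag_pos[OF A] in_n pos sym[of p q] sym[of q r] sym[of r s] sym[of s p]
    by (auto simp: a_b_c_d_def)
  have ent: "A p p = a" "A q q = b" "A r r = c" "A s s = d" "A p q = x" "A q p = x" "A q r = y" "A r q = y"
    "A r s = z" "A s r = z" "A s p = w" "A p s = w" "A p r = 0" "A r p = 0" "A q s = 0" "A s q = 0"
    using sym in_n chords by (auto simp: a_b_c_d_def x_y_z_w_def)
  have quad: "(\<Sum>i<n. \<Sum>j<n. V i * A i j * V j) = a * V p * V p + b * V q * V q + c * V r * V r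
      + d * V s * V s + 2 * x * V p * V q + 2 * y * V q * V r + 2 * z * V r * V s + 2 * w * V s * V p" for V
    unfolding set using dist by (simp add: ent algebra_simps)
  define \<alpha> where "\<alpha> = a - x\<^sup>2 / b - w\<^sup>2 / d"
  define \<beta> where "\<beta> = c - y\<^sup>2 / b - z\<^sup>2 / d"
  define \<gamma> where "\<gamma> = x * y / b + w * z / d"
  have \<gamma>: "0 < \<gamma>" using xyzw abcd by (simp add: \<gamma>_def add_pos_pos)
  \<comment> \<open>minimising the form of A over the coordinates q and s leaves the binary form
    \<open>\<alpha> s\<^sub>0\<^sup>2 + \<beta> t\<^sub>0\<^sup>2 - 2\<gamma> s\<^sub>0 t\<^sub>0\<close> in the coordinates p and r\<close>
  have binary: "0 \<le> \<alpha> * s0 * s0 + \<beta> * t0 * t0 - 2 * \<gamma> * s0 * t0" for s0 t0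
  proof -
    define V where "V = (\<lambda>m. if m = p then s0 else if m = q then - (x * s0 + y * t0) / b
        else if m = r then t0 else if m = s then - (w * s0 + z * t0) / d else 0)"
    have "0 \<le> (\<Sum>i<n. \<Sum>j<n. V i * A i j * V j)" by (rule doubly_nonneg_quad_nonneg[OF A])
    also have "\<dots> = \<alpha> * s0 * s0 + \<beta> * t0 * t0 - 2 * \<gamma> * s0 * t0"
      unfolding quad using dist abcd
      by (simp add: V_def \<alpha>_def \<beta>_def \<gamma>_def field_simps power2_eq_square)
    finally show ?thesis .
  qed
  define vp vr where "vp = sqrt \<beta>" "vr = sqrt \<alpha>"
  have vpr: "0 < vp" "0 < vr" "vp * vp = \<beta>" "vr * vr = \<alpha>" and \<gamma>_le: "\<gamma> \<le> vp * vr"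
    using binary_form_nonneg[of \<alpha> \<beta> \<gamma>, OF binary \<gamma>] by (auto simp: vp_vr_def mult.commute)
  define vq vs where "vq = (x * vp + y * vr) / b" "vs = (w * vp + z * vr) / d"
  define v where "v = (\<lambda>m. if m = p then vp else if m = q then vq else if m = r then vr else vs)"
  have v: "v p = vp" "v q = vq" "v r = vr" "v s = vs" using dist by (auto simp: v_def)
  have v_pos: "0 < vp" "0 < vq" "0 < vr" "0 < vs"
    using vpr xyzw abcd by (auto simp: vq_vs_def intro!: add_pos_pos divide_pos_pos)
  have dom_qs: "x * vp + y * vr \<le> b * vq" "z * vr + w * vp \<le> d * vs"
    using abcd by (simp_all add: vq_vs_def)
  have "a * vp - x * vq - w * vs = \<alpha> * vp - \<gamma> * vr"
    using abcd by (simp add: vq_vs_def \<alpha>_def \<gamma>_def field_simps power2_eq_square)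
  also have "\<dots> = vr * (vp * vr - \<gamma>)" by (simp add: vpr(4)[symmetric] algebra_simps)
  finally have dom_p: "x * vq + w * vs \<le> a * vp"
    using mult_nonneg_nonneg[of vr "vp * vr - \<gamma>"] \<gamma>_le vpr by linarith
  have "c * vr - y * vq - z * vs = \<beta> * vr - \<gamma> * vp"
    using abcd by (simp add: vq_vs_def \<beta>_def \<gamma>_def field_simps power2_eq_square)
  also have "\<dots> = vp * (vp * vr - \<gamma>)" by (simp add: vpr(3)[symmetric] algebra_simps)
  finally have dom_r: "y * vq + z * vs \<le> c * vr"
    using mult_nonneg_nonneg[of vp "vp * vr - \<gamma>"] \<gamma>_le vpr by linarith
  show ?thesis
    by (rule that[of v]) (simp_all only: v ent v_pos dom_qs dom_p dom_r)
qed

lemma cycle4_completely_pos: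
  assumes A: "doubly_nonneg n A" and set: "{..<n} = {p, q, r, s}" and dist: "distinct [p, q, r, s]"
    and pos: "0 < A p q" "0 < A q r" "0 < A r s" "0 < A s p" and chords: "A p r = 0" "A q s = 0"
  shows "completely_pos n A"
proof -
  obtain v where "0 < v p" "0 < v q" "0 < v r" "0 < v s"
    "A p q * v q + A s p * v s \<le> A p p * v p" "A p q * v p + A q r * v r \<le> A q q * v q"
    "A q r * v q + A r s * v s \<le> A r r * v r" "A r s * v r + A s p * v p \<le> A s s * v s"
    by (rule cycle4_scaling[OF assms])
  then show ?thesis
    using doubly_nonneg_sym[OF A] pos chords
    by (intro cycle4_completely_pos_of_dominance[OF set dist]) (auto simp: less_imp_le)
qed

lemma no_five_distinct_below:
  assumes "a < n" "b < n" "c < n" "d < n" "e < n" "n \<le> (4::nat)" "distinct [a, b, c, d, e]"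
  shows False
proof -
  have "5 = card {a, b, c, d, e}" using assms(7) by simp
  also have "\<dots> \<le> card {..<n}" by (rule card_mono) (use assms in auto)
  finally show False using assms(6) by simp
qed

lemma not_simplicial_witness:
  assumes "doubly_nonneg n A" "\<not> simplicial n A k"
  obtains i j where "i < n" "j < n" "i \<noteq> k" "j \<noteq> k" "i \<noteq> j" "0 < A k i" "0 < A k j" "A i j = 0"
  using assms doubly_nonneg_nonneg[OF assms(1)] unfolding simplicial_def
  by (metis less_eq_real_def)

lemma no_simplicial_imp_cycle4:
  assumes A: "doubly_nonneg n A" and n: "n \<le> 4"
    and no_smp: "\<forall>k<n. 0 < A k k \<longrightarrow> \<not> simplicial n A k"
    and nz: "i0 < n" "j0 < n" "0 < A i0 j0"
  obtains p q r s where "{..<n} = {p, q, r, s}" "distinct [p, q, r, s]"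
    "0 < A p q" "0 < A q r" "0 < A r s" "0 < A s p" "A p r = 0" "A q s = 0"
proof -
  note sym = doubly_nonneg_sym[OF A]
  have witness: "\<exists>i j. i < n \<and> j < n \<and> i \<noteq> k \<and> j \<noteq> k \<and> i \<noteq> j \<and> 0 < A k i \<and> 0 < A k j \<and> A i j = 0"
    if "k < n" "0 < A k k" for k
    using not_simplicial_witness[OF A] no_smp that by metis
  define k where "k = i0"
  have k: "k < n" "0 < A k k" using doubly_nonneg_diag_pos[OF A nz] by (simp_all add: k_def nz)
  obtain i j where ij: "i < n" "j < n" "i \<noteq> k" "j \<noteq> k" "i \<noteq> j" "0 < A k i" "0 < A k j" "A i j = 0"
    using witness[OF k] by blast
  have ii: "0 < A i i" and jj: "0 < A j j"
    using doubly_nonneg_diag_pos[OF A k(1) ij(1) ij(6)] doubly_nonneg_diag_pos[OF A k(1) ij(2) ij(7)] by simp_all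
  \<comment> \<open>i has a neighbour l with \<open>A k l = 0\<close>: otherwise both ends of its missing edge would lie in \<open>{k, i, j}\<close>\<close>
  obtain l where l: "l < n" "l \<noteq> k" "l \<noteq> i" "l \<noteq> j" "0 < A i l" "A k l = 0"
  proof -
    obtain a b where ab: "a < n" "b < n" "a \<noteq> i" "b \<noteq> i" "a \<noteq> b" "0 < A i a" "0 < A i b" "A a b = 0"
      using witness[OF ij(1) ii] by blast
    have "a \<noteq> j" "b \<noteq> j" using ab(6,7) ij(8) sym[OF ij(1,2)] by auto
    moreover have "A a b = A b a" using sym[OF ab(1,2)] by simp
    ultimately show thesis
      using that[of a] that[of b] ab ij no_five_distinct_below[OF k(1) ij(1,2) ab(1,2) n] by fastforce
  qed
  \<comment> \<open>j has two non-adjacent neighbours, which by counting must be k and l\<close>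
  have jl: "0 < A j l"
  proof -
    obtain a b where ab: "a < n" "b < n" "a \<noteq> j" "b \<noteq> j" "a \<noteq> b" "0 < A j a" "0 < A j b" "A a b = 0"
      using witness[OF ij(2) jj] by blast
    have "a \<noteq> i" "b \<noteq> i" using ab(6,7) ij(8) sym[OF ij(1,2)] by auto
    then have "a = k \<or> a = l" "b = k \<or> b = l"
      using ab ij l no_five_distinct_below[OF k(1) ij(1,2) l(1) ab(1) n]
        no_five_distinct_below[OF k(1) ij(1,2) l(1) ab(2) n] by auto
    then show ?thesis using ab by auto
  qed
  have "{..<n} = {k, i, l, j}"
    using no_five_distinct_below[OF k(1) ij(1,2) l(1) _ n] ij l k by fastforce
  then show thesis
    using that ij l jl sym[OF ij(2) l(1)] sym[OF k(1) ij(2)] by auto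
qed

theorem doubly_nonneg_imp_completely_pos:
  "doubly_nonneg n A \<Longrightarrow> n \<le> 4 \<Longrightarrow> completely_pos n A"
proof (induction "card (matrix_support n A)" arbitrary: A rule: less_induct)
  case less
  note A = less.prems(1) and n = less.prems(2)
  show ?case
  proof (cases "\<exists>k<n. 0 < A k k \<and> simplicial n A k")
    case True
    then obtain k where "k < n" "0 < A k k" "simplicial n A k" by blast
    then obtain A' u where A': "doubly_nonneg n A'" "\<forall>i. 0 \<le> u i"
      "\<forall>i<n. \<forall>j<n. A i j = A' i j + u i * u j" "matrix_support n A' \<subset> matrix_support n A"
      by (rule doubly_nonneg_peel_simplicial[OF A])
    have "card (matrix_support n A') < card (matrix_support n A)"
      by (rule psubset_card_mono[OF finite_matrix_support A'(4)])
    then have "completely_pos n A'" using less.hyps A'(1) n by blast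
    then show ?thesis using A'(2,3) by (rule completely_pos_add_rank1)
  next
    case False
    show ?thesis
    proof (cases "\<forall>i<n. \<forall>j<n. A i j = 0")
      case True
      then show ?thesis by (rule completely_pos_zero)
    next
      case nonzero: False
      then obtain i j where "i < n" "j < n" "0 < A i j"
        using doubly_nonneg_nonneg[OF A] by (metis less_eq_real_def)
      with False obtain p q r s where "{..<n} = {p, q, r, s}" "distinct [p, q, r, s]"
        "0 < A p q" "0 < A q r" "0 < A r s" "0 < A s p" "A p r = 0" "A q s = 0"
        using no_simplicial_imp_cycle4[OF A n] by blast
      then show ?thesis by (rule cycle4_completely_pos[OF A])
    qed
  qed
qed

section \<open>Phase-averaged product states\<close>

definition separable_cone :: "nat \<Rightarrow> (nat \<times> nat \<Rightarrow> nat \<times> nat \<Rightarrow> complex) \<Rightarrow> bool" where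
  "separable_cone d R \<longleftrightarrow> (\<exists>(n::nat) (p :: nat \<Rightarrow> real) A B.
      (\<forall>m<n. 0 \<le> p m) \<and> (\<forall>m<n. density_on {..<d} (A m) \<and> density_on {..<d} (B m)) \<and>
      (\<forall>i<d. \<forall>j<d. \<forall>k<d. \<forall>l<d. R (i, j) (k, l) = (\<Sum>m<n. complex_of_real (p m) * A m i k * B m j l)))"

lemma separable_cone_zero: "separable_cone d (\<lambda>a b. 0)"
  unfolding separable_cone_def by (rule exI[of _ 0]) simp

lemma separable_cone_add:
  assumes "separable_cone d R1" "separable_cone d R2"
  shows "separable_cone d (\<lambda>a b. R1 a b + R2 a b)"
proof -
  obtain n1 :: nat and p1 :: "nat \<Rightarrow> real" and A1 B1 where h1: "\<forall>m<n1. 0 \<le> p1 m"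
    "\<forall>m<n1. density_on {..<d} (A1 m) \<and> density_on {..<d} (B1 m)"
    "\<forall>i<d. \<forall>j<d. \<forall>k<d. \<forall>l<d. R1 (i, j) (k, l) = (\<Sum>m<n1. complex_of_real (p1 m) * A1 m i k * B1 m j l)"
    using assms(1) unfolding separable_cone_def by blast
  obtain n2 :: nat and p2 :: "nat \<Rightarrow> real" and A2 B2 where h2: "\<forall>m<n2. 0 \<le> p2 m"
    "\<forall>m<n2. density_on {..<d} (A2 m) \<and> density_on {..<d} (B2 m)"
    "\<forall>i<d. \<forall>j<d. \<forall>k<d. \<forall>l<d. R2 (i, j) (k, l) = (\<Sum>m<n2. complex_of_real (p2 m) * A2 m i k * B2 m j l)"
    using assms(2) unfolding separable_cone_def by blast
  define p where "p m = (if m < n1 then p1 m else p2 (m - n1))" for m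
  define A where "A m = (if m < n1 then A1 m else A2 (m - n1))" for m
  define B where "B m = (if m < n1 then B1 m else B2 (m - n1))" for m
  have split: "(\<Sum>m<n1 + n2. f m) = (\<Sum>m<n1. f m) + (\<Sum>m<n2. f (m + n1))" for f :: "nat \<Rightarrow> complex"
    by (induction n2) (auto simp: add.commute add.left_commute)
  show ?thesis unfolding separable_cone_def
  proof (intro exI conjI)
    show "\<forall>m<n1 + n2. 0 \<le> p m" using h1(1) h2(1) by (auto simp: p_def)
    show "\<forall>m<n1 + n2. density_on {..<d} (A m) \<and> density_on {..<d} (B m)"
      using h1(2) h2(2) by (auto simp: A_def B_def)
    show "\<forall>i<d. \<forall>j<d. \<forall>k<d. \<forall>l<d. R1 (i, j) (k, l) + R2 (i, j) (k, l)
        = (\<Sum>m<n1 + n2. complex_of_real (p m) * A m i k * B m j l)"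
      using h1(3) h2(3) by (simp add: split p_def A_def B_def)
  qed
qed

lemma separable_cone_sum_list:
  "(\<And>x. x \<in> set xs \<Longrightarrow> separable_cone d (R x)) \<Longrightarrow> separable_cone d (\<lambda>a b. \<Sum>x\<leftarrow>xs. R x a b)"
  by (induction xs) (simp_all add: separable_cone_zero separable_cone_add)

lemma separable_cone_imp_separable:
  assumes cone: "separable_cone d \<rho>" and tr: "trace_on (bidx d) \<rho> = 1"
  shows "separable d \<rho>"
proof -
  obtain n :: nat and p :: "nat \<Rightarrow> real" and A B where p: "\<forall>m<n. 0 \<le> p m"
    and dens: "\<forall>m<n. density_on {..<d} (A m) \<and> density_on {..<d} (B m)"
    and \<rho>: "\<forall>i<d. \<forall>j<d. \<forall>k<d. \<forall>l<d. \<rho> (i, j) (k, l) = (\<Sum>m<n. complex_of_real (p m) * A m i k * B m j l)"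
    using cone unfolding separable_cone_def by blast
  have "trace_on (bidx d) \<rho> = (\<Sum>i<d. \<Sum>j<d. \<Sum>m<n. complex_of_real (p m) * A m i i * B m j j)"
    unfolding trace_on_def sum_bidx using \<rho> by simp
  also have "\<dots> = (\<Sum>m<n. \<Sum>i<d. \<Sum>j<d. complex_of_real (p m) * A m i i * B m j j)"
    by (subst sum_swap_middle, rule sum.swap)
  also have "\<dots> = (\<Sum>m<n. complex_of_real (p m) * (trace_on {..<d} (A m) * trace_on {..<d} (B m)))"
    unfolding trace_on_def sum_product by (simp add: sum_distrib_left mult.assoc)
  also have "\<dots> = complex_of_real (\<Sum>m<n. p m)"
    using dens by (simp add: density_on_def)
  finally have "(\<Sum>m<n. p m) = 1" using tr by (simp del: of_real_sum)
  then show ?thesis unfolding separable_def using p dens \<rho> by blast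
qed

lemma density_on_rank1:
  assumes "(\<Sum>i<d. \<phi> i * cnj (\<phi> i)) = 1"
  shows "density_on {..<d} (\<lambda>i k. \<phi> i * cnj (\<phi> k))"
  using assms psd_on_rank1 by (simp add: density_on_def trace_on_def)

lemma sum_roots_of_unity_eq_0:
  fixes m :: int and N :: nat
  assumes "\<not> int N dvd m"
  shows "(\<Sum>s<N. cis (real s * (2 * pi * of_int m / N))) = 0"
proof (cases "N = 0")
  case False
  define \<omega> where "\<omega> = cis (2 * pi * of_int m / N)"
  have "\<omega> \<noteq> 1"
  proof
    assume "\<omega> = 1"
    then have "cos (2 * pi * of_int m / N) = 1" by (simp add: \<omega>_def complex_eq_iff)
    then obtain k :: int where "2 * pi * of_int m / N = of_int k * 2 * pi" by (auto simp: cos_one_2pi_int)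
    then have "real_of_int m = real N * of_int k" using False by (simp add: field_simps)
    then have "m = int N * k" by (metis of_int_eq_iff of_int_mult of_int_of_nat_eq)
    then show False using assms by simp
  qed
  have "\<omega> ^ N = cis (2 * pi * of_int m)"
    using False unfolding \<omega>_def DeMoivre by simp
  also have "\<dots> = 1" by (rule cis_multiple_2pi) simp
  finally have "\<omega> ^ N = 1" .
  have "(\<Sum>s<N. cis (real s * (2 * pi * of_int m / N))) = (\<Sum>s<N. \<omega> ^ s)"
    by (simp add: \<omega>_def DeMoivre)
  also have "\<dots> = (\<omega> ^ N - 1) / (\<omega> - 1)" by (rule geometric_sum[OF \<open>\<omega> \<noteq> 1\<close>])
  finally show ?thesis using \<open>\<omega> ^ N = 1\<close> by simp
qed simp

lemma pow2_pair_sums_mod_17: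
  fixes i j k l :: nat
  assumes "i < 4" "j < 4" "k < 4" "l < 4"
  shows "int 17 dvd 2 ^ i + 2 ^ j - 2 ^ k - 2 ^ l \<longleftrightarrow> i = k \<and> j = l \<or> i = l \<and> j = k"
proof -
  have table: "\<forall>i\<in>{..<4::nat}. \<forall>j\<in>{..<4::nat}. \<forall>k\<in>{..<4::nat}. \<forall>l\<in>{..<4::nat}.
      \<bar>(2::int) ^ i + 2 ^ j - 2 ^ k - 2 ^ l\<bar> < 17 \<and>
      ((2::int) ^ i + 2 ^ j - 2 ^ k - 2 ^ l = 0 \<longleftrightarrow> i = k \<and> j = l \<or> i = l \<and> j = k)"
    by (simp add: lessThan_nat_numeral)
  have "int 17 dvd x \<longleftrightarrow> x = 0" if "\<bar>x\<bar> < 17" for x :: int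
    using that dvd_imp_le_int[of x 17] by auto
  with table assms show ?thesis by auto
qed

definition phase_vec :: "(nat \<Rightarrow> real) \<Rightarrow> nat \<Rightarrow> nat \<Rightarrow> complex" where
  "phase_vec r s i = complex_of_real (r i) * cis (real s * (2 * pi * 2 ^ i / 17))"

lemma density_on_phase_vec:
  assumes "(\<Sum>i<d. r i * r i) = 1"
  shows "density_on {..<d} (\<lambda>i k. phase_vec r s i * cnj (phase_vec r s k))"
proof (rule density_on_rank1)
  have unit: "cis x * cnj (cis x) = 1" for x by (simp add: cis_cnj cis_mult)
  have "phase_vec r s i * cnj (phase_vec r s i) = complex_of_real (r i * r i) *
      (cis (real s * (2 * pi * 2 ^ i / 17)) * cnj (cis (real s * (2 * pi * 2 ^ i / 17))))" for i
    by (simp add: phase_vec_def algebra_simps)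
  then have "phase_vec r s i * cnj (phase_vec r s i) = complex_of_real (r i * r i)" for i
    by (simp only: unit mult_1_right)
  then have "(\<Sum>i<d. phase_vec r s i * cnj (phase_vec r s i)) = complex_of_real (\<Sum>i<d. r i * r i)"
    by (simp only: of_real_sum)
  then show "(\<Sum>i<d. phase_vec r s i * cnj (phase_vec r s i)) = 1"
    using assms by simp
qed

text \<open>With \<open>\<phi>\<^sub>s = phase_vec r s\<close>, averaging over \<open>s < 17\<close> kills the entry \<open>(i j, k l)\<close> of
  \<open>|\<phi>\<^sub>s\<rangle>\<langle>\<phi>\<^sub>s| \<otimes> |\<phi>\<^sub>s\<rangle>\<langle>\<phi>\<^sub>s|\<close> unless \<open>2\<^sup>i + 2\<^sup>j \<equiv> 2\<^sup>k + 2\<^sup>l (mod 17)\<close>, that is,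
  unless \<open>{i, j} = {k, l}\<close>.\<close>
lemma sum_phase_vec_products:
  assumes "i < 4" "j < 4" "k < 4" "l < 4"
  shows "(\<Sum>s<17. phase_vec r s i * cnj (phase_vec r s k) * (phase_vec r s j * cnj (phase_vec r s l)))
    = (if i = k \<and> j = l \<or> i = l \<and> j = k then complex_of_real (17 * (r i * r i) * (r j * r j)) else 0)"
proof -
  define m where "m = (2::int) ^ i + 2 ^ j - 2 ^ k - 2 ^ l"
  have "phase_vec r s i * cnj (phase_vec r s k) * (phase_vec r s j * cnj (phase_vec r s l))
      = complex_of_real (r i * r k * r j * r l) * cis (real s * (2 * pi * of_int m / 17))" for s
    by (simp add: phase_vec_def m_def cis_cnj cis_mult algebra_simps add_divide_distrib diff_divide_distrib)
  then have sum: "(\<Sum>s<17. phase_vec r s i * cnj (phase_vec r s k) * (phase_vec r s j * cnj (phase_vec r s l)))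
      = complex_of_real (r i * r k * r j * r l) * (\<Sum>s<(17::nat). cis (real s * (2 * pi * of_int m / 17)))"
    by (simp add: sum_distrib_left)
  show ?thesis
  proof (cases "i = k \<and> j = l \<or> i = l \<and> j = k")
    case True
    then have "m = 0" "r i * r k * r j * r l = (r i * r i) * (r j * r j)" by (auto simp: m_def algebra_simps)
    then show ?thesis using True unfolding sum by (simp only:) simp
  next
    case False
    then have "\<not> int 17 dvd m" using pow2_pair_sums_mod_17[OF assms] by (simp add: m_def)
    then have "(\<Sum>s<(17::nat). cis (real s * (2 * pi * of_int m / 17))) = 0"
      using sum_roots_of_unity_eq_0[of 17 m] by simp
    then show ?thesis using False unfolding sum by auto
  qed
qed

definition twirled_product :: "(nat \<Rightarrow> real) \<Rightarrow> nat \<times> nat \<Rightarrow> nat \<times> nat \<Rightarrow> complex" where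
  "twirled_product u = (\<lambda>(i, j) (k, l).
     if i = k \<and> j = l \<or> i = l \<and> j = k then complex_of_real (u i * u j) else 0)"

lemma separable_cone_twirled_product:
  assumes u: "\<forall>i. 0 \<le> u i" and d: "d \<le> 4"
  shows "separable_cone d (twirled_product u)"
proof (cases "(\<Sum>i<d. u i) = 0")
  case True
  then have "\<forall>i<d. u i = 0" using u by (simp add: sum_nonneg_eq_0_iff)
  then show ?thesis unfolding separable_cone_def twirled_product_def by (intro exI[of _ 0]) auto
next
  case False
  define S where "S = (\<Sum>i<d. u i)"
  have S: "0 < S" using False u unfolding S_def by (simp add: sum_nonneg order_less_le)
  define r where "r i = sqrt (u i / S)" for i
  have rr: "r i * r i = u i / S" for i using u S by (simp add: r_def)
  have "(\<Sum>i<d. r i * r i) = 1" using S by (simp add: rr S_def flip: sum_divide_distrib)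
  then have dens: "density_on {..<d} (\<lambda>i k. phase_vec r s i * cnj (phase_vec r s k))" for s
    by (rule density_on_phase_vec)
  show ?thesis unfolding separable_cone_def
  proof (intro exI conjI)
    show "\<forall>s<17. 0 \<le> S * S / 17" by simp
    show "\<forall>s<17. density_on {..<d} (\<lambda>i k. phase_vec r s i * cnj (phase_vec r s k)) \<and>
        density_on {..<d} (\<lambda>i k. phase_vec r s i * cnj (phase_vec r s k))" using dens by simp
    show "\<forall>i<d. \<forall>j<d. \<forall>k<d. \<forall>l<d. twirled_product u (i, j) (k, l) = (\<Sum>s<17. complex_of_real (S * S / 17)
        * (phase_vec r s i * cnj (phase_vec r s k)) * (phase_vec r s j * cnj (phase_vec r s l)))"
    proof (intro allI impI)
      fix i j k l assume "i < d" "j < d" "k < d" "l < d"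
      then have small: "i < 4" "j < 4" "k < 4" "l < 4" using d by auto
      have "(\<Sum>s<17. complex_of_real (S * S / 17)
          * (phase_vec r s i * cnj (phase_vec r s k)) * (phase_vec r s j * cnj (phase_vec r s l)))
          = complex_of_real (S * S / 17) * (\<Sum>s<17. phase_vec r s i * cnj (phase_vec r s k)
            * (phase_vec r s j * cnj (phase_vec r s l)))"
        by (simp add: sum_distrib_left mult.assoc)
      also have "\<dots> = twirled_product u (i, j) (k, l)"
      proof (cases "i = k \<and> j = l \<or> i = l \<and> j = k")
        case True
        have "S * S / 17 * (17 * (r i * r i) * (r j * r j)) = u i * u j" using S by (simp add: rr)
        then show ?thesis unfolding sum_phase_vec_products[OF small] twirled_product_def
          by (simp only: True if_True case_prod_conv of_real_mult[symmetric])
      next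
        case False
        then show ?thesis unfolding sum_phase_vec_products[OF small] twirled_product_def
          by (simp only: False if_False case_prod_conv mult_zero_right)
      qed
      finally show "twirled_product u (i, j) (k, l) = (\<Sum>s<17. complex_of_real (S * S / 17)
          * (phase_vec r s i * cnj (phase_vec r s k)) * (phase_vec r s j * cnj (phase_vec r s l)))" ..
    qed
  qed
qed

section \<open>Diagonal symmetric states\<close>

definition sorted_pair :: "nat \<times> nat \<Rightarrow> nat \<times> nat" where
  "sorted_pair a = (min (fst a) (snd a), max (fst a) (snd a))"

definition dicke_coeff :: "nat \<times> nat \<Rightarrow> real" where
  "dicke_coeff a = (if fst a = snd a then 1 else 1 / sqrt 2)"

definition upper_pairs :: "nat \<Rightarrow> (nat \<times> nat) set" where
  "upper_pairs d = {(i, j). i \<le> j \<and> j < d}"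

lemma finite_upper_pairs: "finite (upper_pairs d)"
  by (rule finite_subset[of _ "{..<d} \<times> {..<d}"]) (auto simp: upper_pairs_def)

lemma sorted_pair_in_upper_pairs: "a \<in> bidx d \<Longrightarrow> sorted_pair a \<in> upper_pairs d"
  by (cases a) (auto simp: bidx_def upper_pairs_def sorted_pair_def)

lemma sorted_pair_eq_iff: "sorted_pair (i, j) = sorted_pair (k, l) \<longleftrightarrow> i = k \<and> j = l \<or> i = l \<and> j = k"
  by (auto simp: sorted_pair_def min_def max_def split: if_splits)

lemma Dvec_eq: "i \<le> j \<Longrightarrow> Dvec i j a = (if sorted_pair a = (i, j) then complex_of_real (dicke_coeff a) else 0)"
  by (cases a) (auto simp: Dvec_def sorted_pair_def dicke_coeff_def min_def max_def of_real_divide split: if_splits)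

lemma DS_state_sorted_form:
  assumes "DS_state d \<rho>"
  obtains p where "\<forall>i j. i \<le> j \<and> j < d \<longrightarrow> 0 \<le> p i j"
    "\<forall>a\<in>bidx d. \<forall>b\<in>bidx d. \<rho> a b = (if sorted_pair a = sorted_pair b
        then complex_of_real (case_prod p (sorted_pair a) * dicke_coeff a * dicke_coeff b) else 0)"
proof -
  obtain p where p: "\<forall>i j. i \<le> j \<and> j < d \<longrightarrow> 0 \<le> p i j"
    and \<rho>: "\<forall>a\<in>bidx d. \<forall>b\<in>bidx d. \<rho> a b = (\<Sum>(i, j)\<in>upper_pairs d. complex_of_real (p i j) * Dvec i j a * cnj (Dvec i j b))"
    using assms unfolding DS_state_def upper_pairs_def by blast
  have "\<rho> a b = (if sorted_pair a = sorted_pair b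
      then complex_of_real (case_prod p (sorted_pair a) * dicke_coeff a * dicke_coeff b) else 0)"
    if ab: "a \<in> bidx d" "b \<in> bidx d" for a b
  proof -
    \<comment> \<open>only the Dicke vector indexed by the sorted pair of a is nonzero at a\<close>
    have "\<rho> a b = (\<Sum>x\<in>upper_pairs d. if x = sorted_pair a then (if sorted_pair a = sorted_pair b
        then complex_of_real (case_prod p (sorted_pair a) * dicke_coeff a * dicke_coeff b) else 0) else 0)"
      unfolding \<rho>[rule_format, OF ab]
    proof (intro sum.cong refl)
      fix x assume "x \<in> upper_pairs d"
      then obtain i j where x: "x = (i, j)" "i \<le> j" by (auto simp: upper_pairs_def)
      show "(case x of (i, j) \<Rightarrow> complex_of_real (p i j) * Dvec i j a * cnj (Dvec i j b))
          = (if x = sorted_pair a then (if sorted_pair a = sorted_pair b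
            then complex_of_real (case_prod p (sorted_pair a) * dicke_coeff a * dicke_coeff b) else 0) else 0)"
        using x by (auto simp: Dvec_eq; metis case_prod_conv)
    qed
    also have "\<dots> = (if sorted_pair a = sorted_pair b
        then complex_of_real (case_prod p (sorted_pair a) * dicke_coeff a * dicke_coeff b) else 0)"
      using sorted_pair_in_upper_pairs[OF ab(1)] by (simp add: sum.delta' finite_upper_pairs)
    finally show ?thesis .
  qed
  then show ?thesis using that p by blast
qed

lemma Dvec_norm:
  assumes "i \<le> j" "j < d"
  shows "(\<Sum>a\<in>bidx d. Dvec i j a * cnj (Dvec i j a)) = 1"
proof -
  have "(\<Sum>a\<in>bidx d. Dvec i j a * cnj (Dvec i j a))
      = (\<Sum>a\<in>{a \<in> bidx d. sorted_pair a = (i, j)}. complex_of_real (dicke_coeff a * dicke_coeff a))"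
    by (simp add: Dvec_eq[OF assms(1)] sum.inter_filter bidx_def if_distrib cong: if_cong)
  also have "\<dots> = 1"
  proof (cases "i = j")
    case True
    then have "{a \<in> bidx d. sorted_pair a = (i, j)} = {(i, i)}"
      using assms by (auto simp: sorted_pair_def bidx_def min_def max_def split: if_splits)
    then show ?thesis using True by (simp add: dicke_coeff_def)
  next
    case False
    then have "{a \<in> bidx d. sorted_pair a = (i, j)} = {(i, j), (j, i)}"
      using assms by (auto simp: sorted_pair_def bidx_def min_def max_def split: if_splits)
    moreover have half: "dicke_coeff (i, j) * dicke_coeff (i, j) = 1 / 2" "dicke_coeff (j, i) * dicke_coeff (j, i) = 1 / 2"
      using False by (simp_all add: dicke_coeff_def)
    ultimately show ?thesis using False by (simp add: half del: of_real_mult)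
  qed
  finally show ?thesis .
qed

lemma DS_state_trace:
  assumes "DS_state d \<rho>"
  shows "trace_on (bidx d) \<rho> = 1"
proof -
  obtain p where p: "(\<Sum>(i, j)\<in>upper_pairs d. p i j) = 1"
    and \<rho>: "\<forall>a\<in>bidx d. \<forall>b\<in>bidx d. \<rho> a b = (\<Sum>(i, j)\<in>upper_pairs d. complex_of_real (p i j) * Dvec i j a * cnj (Dvec i j b))"
    using assms unfolding DS_state_def upper_pairs_def by blast
  have "trace_on (bidx d) \<rho>
      = (\<Sum>a\<in>bidx d. \<Sum>x\<in>upper_pairs d. complex_of_real (case_prod p x) * (case_prod Dvec x a * cnj (case_prod Dvec x a)))"
    unfolding trace_on_def using \<rho> by (intro sum.cong refl) (auto simp: case_prod_beta mult.assoc)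
  also have "\<dots> = (\<Sum>x\<in>upper_pairs d. complex_of_real (case_prod p x) * (\<Sum>a\<in>bidx d. case_prod Dvec x a * cnj (case_prod Dvec x a)))"
    by (simp add: sum.swap[of _ "bidx d"] sum_distrib_left)
  also have "\<dots> = complex_of_real (\<Sum>(i, j)\<in>upper_pairs d. p i j)"
    by (auto simp: upper_pairs_def Dvec_norm case_prod_beta intro!: sum.cong)
  finally show ?thesis using p by simp
qed

definition symmetric_pair_form :: "nat \<Rightarrow> (nat \<times> nat \<Rightarrow> nat \<times> nat \<Rightarrow> complex) \<Rightarrow> (nat \<Rightarrow> nat \<Rightarrow> real) \<Rightarrow> bool" where
  "symmetric_pair_form d \<rho> M \<longleftrightarrow> (\<forall>i<d. \<forall>j<d. \<forall>k<d. \<forall>l<d.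
     \<rho> (i, j) (k, l) = (if i = k \<and> j = l \<or> i = l \<and> j = k then complex_of_real (M i j) else 0))"

lemma DS_state_symmetric_pair_form:
  assumes "DS_state d \<rho>"
  obtains M where "\<forall>i<d. \<forall>j<d. 0 \<le> M i j" "symmetric_pair_form d \<rho> M"
proof -
  obtain p where p: "\<forall>i j. i \<le> j \<and> j < d \<longrightarrow> 0 \<le> p i j"
    and \<rho>: "\<forall>a\<in>bidx d. \<forall>b\<in>bidx d. \<rho> a b = (if sorted_pair a = sorted_pair b
        then complex_of_real (case_prod p (sorted_pair a) * dicke_coeff a * dicke_coeff b) else 0)"
    by (rule DS_state_sorted_form[OF assms])
  define M where "M i j = case_prod p (sorted_pair (i, j)) * (dicke_coeff (i, j))\<^sup>2" for i j
  show ?thesis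
  proof
    show "\<forall>i<d. \<forall>j<d. 0 \<le> M i j"
      using p by (auto simp: M_def sorted_pair_def)
    show "symmetric_pair_form d \<rho> M"
      unfolding symmetric_pair_form_def
    proof (intro allI impI)
      fix i j k l assume "i < d" "j < d" "k < d" "l < d"
      then have \<rho>_ijkl: "\<rho> (i, j) (k, l) = (if sorted_pair (i, j) = sorted_pair (k, l) then complex_of_real
          (case_prod p (sorted_pair (i, j)) * dicke_coeff (i, j) * dicke_coeff (k, l)) else 0)"
        using \<rho>[rule_format, of "(i, j)" "(k, l)"] by simp
      show "\<rho> (i, j) (k, l)
          = (if i = k \<and> j = l \<or> i = l \<and> j = k then complex_of_real (M i j) else 0)"
      proof (cases "i = k \<and> j = l \<or> i = l \<and> j = k")
        case True
        then have "sorted_pair (i, j) = sorted_pair (k, l)" "dicke_coeff (k, l) = dicke_coeff (i, j)"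
          by (auto simp: sorted_pair_def dicke_coeff_def)
        then show ?thesis using True \<rho>_ijkl by (simp add: M_def power2_eq_square mult.assoc)
      next
        case False
        then show ?thesis using \<rho>_ijkl by (simp only: sorted_pair_eq_iff if_False)
      qed
    qed
  qed
qed

lemma separable_cone_cong:
  assumes "separable_cone d R" "\<forall>i<d. \<forall>j<d. \<forall>k<d. \<forall>l<d. R' (i, j) (k, l) = R (i, j) (k, l)"
  shows "separable_cone d R'"
proof -
  obtain n :: nat and p :: "nat \<Rightarrow> real" and A B where "\<forall>m<n. 0 \<le> p m"
    "\<forall>m<n. density_on {..<d} (A m) \<and> density_on {..<d} (B m)"
    "\<forall>i<d. \<forall>j<d. \<forall>k<d. \<forall>l<d. R (i, j) (k, l) = (\<Sum>m<n. complex_of_real (p m) * A m i k * B m j l)"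
    using assms(1) unfolding separable_cone_def by blast
  then show ?thesis
    unfolding separable_cone_def using assms(2) by (intro exI[of _ n] exI[of _ p] exI[of _ A] exI[of _ B]) simp
qed

lemma separable_cone_of_completely_pos:
  assumes form: "symmetric_pair_form d \<rho> M" and cp: "completely_pos d M" and d: "d \<le> 4"
  shows "separable_cone d \<rho>"
proof -
  obtain U where U: "\<forall>u\<in>set U. \<forall>i. 0 \<le> u i" "\<forall>i<d. \<forall>j<d. M i j = (\<Sum>u\<leftarrow>U. u i * u j)"
    using cp unfolding completely_pos_def by blast
  have "separable_cone d (\<lambda>a b. \<Sum>u\<leftarrow>U. twirled_product u a b)"
    using U(1) d by (intro separable_cone_sum_list separable_cone_twirled_product) auto
  moreover have "\<forall>i<d. \<forall>j<d. \<forall>k<d. \<forall>l<d. \<rho> (i, j) (k, l) = (\<Sum>u\<leftarrow>U. twirled_product u (i, j) (k, l))"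
  proof (intro allI impI)
    fix i j k l assume ijkl: "i < d" "j < d" "k < d" "l < d"
    note \<rho> = form[unfolded symmetric_pair_form_def, rule_format, OF ijkl]
    show "\<rho> (i, j) (k, l) = (\<Sum>u\<leftarrow>U. twirled_product u (i, j) (k, l))"
    proof (cases "i = k \<and> j = l \<or> i = l \<and> j = k")
      case True
      have "complex_of_real (\<Sum>u\<leftarrow>U. u i * u j) = (\<Sum>u\<leftarrow>U. complex_of_real (u i * u j))"
        by (induction U) simp_all
      then show ?thesis using True \<rho> U(2)[rule_format, OF ijkl(1,2)] by (simp add: twirled_product_def)
    next
      case False
      then show ?thesis
        using \<rho> unfolding twirled_product_def case_prod_conv if_not_P[OF False] by simp
    qed
  qed
  ultimately show ?thesis by (rule separable_cone_cong)
qed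

lemma PPT_imp_doubly_nonneg:
  assumes form: "symmetric_pair_form d \<rho> M" and nonneg: "\<forall>i<d. \<forall>j<d. 0 \<le> M i j" and ppt: "PPT d \<rho>"
  shows "doubly_nonneg d M"
proof -
  \<comment> \<open>M is the block of \<open>\<rho>\<^sup>T\<^sup>B\<close> on the vectors \<open>|i i\<rangle>\<close>\<close>
  have "psd_on {..<d} (\<lambda>i k. partial_transpose_B \<rho> (i, i) (k, k))"
    using ppt unfolding PPT_def by (rule psd_on_principal_submatrix) (auto simp: bidx_def inj_on_def)
  moreover have "partial_transpose_B \<rho> (i, i) (k, k) = complex_of_real (M i k)" if "i < d" "k < d" for i k
    using form[unfolded symmetric_pair_form_def, rule_format, OF that(1) that(2) that(2) that(1)]
    by (simp add: partial_transpose_B_def)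
  ultimately show ?thesis
    using nonneg by (subst (asm) psd_on_cong) (auto simp: doubly_nonneg_def)
qed

theorem theorem3:
  fixes d :: nat and \<rho> :: "nat \<times> nat \<Rightarrow> nat \<times> nat \<Rightarrow> complex"
  assumes "2 \<le> d" and "d \<le> 4" and "DS_state d \<rho>"
  shows "separable d \<rho> \<longleftrightarrow> PPT d \<rho>"
proof
  assume "separable d \<rho>"
  then show "PPT d \<rho>" by (rule separable_imp_PPT)
next
  assume ppt: "PPT d \<rho>"
  obtain M where M: "\<forall>i<d. \<forall>j<d. 0 \<le> M i j" and form: "symmetric_pair_form d \<rho> M"
    by (rule DS_state_symmetric_pair_form[OF assms(3)])
  have "doubly_nonneg d M" by (rule PPT_imp_doubly_nonneg[OF form M ppt])
  then have "completely_pos d M" using assms(2) by (rule doubly_nonneg_imp_completely_pos)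
  then have "separable_cone d \<rho>" using form assms(2) by (intro separable_cone_of_completely_pos)
  then show "separable d \<rho>" using DS_state_trace[OF assms(3)] by (rule separable_cone_imp_separable)
qed

end
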